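(* The theory TRC$^*$ is inconsistent.
   Context: TRC$^*$ is a first-order theory with equality. Its language has a binary function "application", written by juxtaposition ($xy$ denotes $x$ applied to $y$), with the convention that juxtaposition associates to the left ($xyz=(xy)z$). It also has constants $K$, $\mathrm{Abst}$, $\mathrm{Eq}$, $p_1$, $p_2$ and a binary function $\langle x,y\rangle$ (pairing); here $K$ is a constant, i.e. an object of the domain. The axioms of TRC$^*$ are: (I$^*$) $K\,x\,y=x$; (II) $p_1\langle x_1,x_2\rangle=x_1$ and $p_2\langle x_1,x_2\rangle=x_2$; (III) $\langle p_1x,p_2x\rangle=x$; (IV) $\langle f,g\rangle x=\langle fx,gx\rangle$; (V$^*$) $\mathrm{Abst}\,x\,y\,z=x\,(K z)\,(y\,z)$; (VI) $\mathrm{Eq}\langle x,y\rangle=p_1$ if $x=y$, and $\mathrm{Eq}\langle x,y\rangle=p_2$ if $x\neq y$; (VII) extensionality: if $fx=gx$ for all $x$, then $f=g$; (VIII) $p_1\neq p_2$. *)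

theory Defs
  imports Main
begin

definition trc_model ::
  "('a \<Rightarrow> 'a \<Rightarrow> 'a) \<Rightarrow> 'a \<Rightarrow> 'a \<Rightarrow> 'a \<Rightarrow> 'a \<Rightarrow> 'a \<Rightarrow> ('a \<Rightarrow> 'a \<Rightarrow> 'a) \<Rightarrow> bool"
where
  "trc_model ap K Abst Eq p1 p2 pr \<longleftrightarrow>
     (\<forall>x y. ap (ap K x) y = x) \<and>
     (\<forall>x1 x2. ap p1 (pr x1 x2) = x1 \<and> ap p2 (pr x1 x2) = x2) \<and>
     (\<forall>x. pr (ap p1 x) (ap p2 x) = x) \<and>
     (\<forall>f g x. ap (pr f g) x = pr (ap f x) (ap g x)) \<and>
     (\<forall>x y z. ap (ap (ap Abst x) y) z = ap (ap x (ap K z)) (ap y z)) \<and>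
     (\<forall>x y. ap Eq (pr x y) = (if x = y then p1 else p2)) \<and>
     (\<forall>f g. (\<forall>x. ap f x = ap g x) \<longrightarrow> f = g) \<and>
     p1 \<noteq> p2"

end

theory Submission
  imports Defs
begin

text \<open>Abst and K yield a self-application combinator W with W z = K (z z), and Abst applied
to K Eq composes Eq with a pairing, giving the diagonal term D with D z = Eq \<langle>W z, K p2\<rangle>.
Then D D = Eq \<langle>K (D D), K p2\<rangle>, which is p1 if D D = p2 and p2 otherwise: Russell's
paradox, since p1 \<noteq> p2.\<close>

locale combinatory_structure =
  fixes ap :: "'a \<Rightarrow> 'a \<Rightarrow> 'a" and K Abst :: 'a
  assumes K_apply: "ap (ap K x) y = x"
    and Abst_apply: "ap (ap (ap Abst x) y) z = ap (ap x (ap K z)) (ap y z)"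
begin

lemma K_inject: "ap K a = ap K b \<longleftrightarrow> a = b"
  by (metis K_apply)

lemma Abst_Abst_K_apply: "ap (ap (ap (ap Abst Abst) K) z) w = ap z z"
  by (simp add: Abst_apply K_apply)

end

locale extensional_combinatory_structure = combinatory_structure +
  assumes extensional: "(\<And>x. ap f x = ap g x) \<Longrightarrow> f = g"
begin

lemma Abst_Abst_K_eq_const: "ap (ap (ap Abst Abst) K) z = ap K (ap z z)"
  by (rule extensional) (simp add: Abst_Abst_K_apply K_apply)

end

locale combinatory_structure_with_pairing = combinatory_structure +
  fixes pr :: "'a \<Rightarrow> 'a \<Rightarrow> 'a"
  assumes ap_pair: "ap (pr f g) x = pr (ap f x) (ap g x)"
begin

lemma Abst_K_pair_apply: "ap (ap (ap Abst (ap K e)) (pr f g)) z = ap e (pr (ap f z) (ap g z))"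
  by (simp add: Abst_apply K_apply ap_pair)

end

theorem mainTheorem7:
  fixes ap :: "'a \<Rightarrow> 'a \<Rightarrow> 'a" and pr :: "'a \<Rightarrow> 'a \<Rightarrow> 'a"
    and K Abst Eq p1 p2 :: 'a
  shows "\<not> trc_model ap K Abst Eq p1 p2 pr"
proof
  assume model: "trc_model ap K Abst Eq p1 p2 pr"
  interpret extensional_combinatory_structure ap K Abst
    using model unfolding trc_model_def by unfold_locales blast+
  interpret combinatory_structure_with_pairing ap K Abst pr
    using model unfolding trc_model_def by unfold_locales blast
  have Eq: "ap Eq (pr x y) = (if x = y then p1 else p2)" and "p1 \<noteq> p2" for x y
    using model unfolding trc_model_def by blast+
  define W where "W = ap (ap Abst Abst) K"
  define D where "D = ap (ap Abst (ap K Eq)) (pr W (ap K (ap K p2)))"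
  have "ap D D = ap Eq (pr (ap W D) (ap K p2))"
    unfolding D_def Abst_K_pair_apply K_apply ..
  also have "ap W D = ap K (ap D D)"
    unfolding W_def by (rule Abst_Abst_K_eq_const)
  finally have "ap D D = (if ap D D = p2 then p1 else p2)"
    unfolding Eq K_inject .
  with \<open>p1 \<noteq> p2\<close> show False
    by (metis (full_types))
qed

end
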